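(* Let $n\ge4$, let $0<\alpha_2,\alpha_3<1$, $\alpha_1=1-\alpha_2-\alpha_3$, and $\lambda^*=\big(\frac{n-1+\alpha_1}{n},\frac{\alpha_2}{n},\frac{\alpha_3}{n}\big)$. Let $i_1$ be an integer with $0\le i_1\le n-4$ and $n-i_1$ even, and let $\mathfrak{p}(i_1)=|l_i(\lambda^* )|$ for $i=\big(i_1,\frac{n-i_1}{2},\frac{n-i_1}{2}\big)$. Then $$\mathfrak{p}(i_1)\le\frac{1}{e(\ln n-1)}\cdot\frac{\Gamma(n+1)}{i_1!\,\Gamma(n-i_1)}\cdot\frac{4\alpha_2(1-\alpha_2)}{(n-i_1)(n-i_1-1)}.$$
   Context: For an integer $n\ge1$ let $I=\{i=(i_1,i_2,i_3)\in\mathbb{Z}_+^3: i_1+i_2+i_3=n\}$ and $l_i(\lambda)=\prod_{s=1}^{3}\frac{1}{i_s!}\prod_{t=0}^{i_s-1}(n\lambda_s-t)$ for $\lambda=(\lambda_1,\lambda_2,\lambda_3)$ (Lagrange fundamental polynomials for the equally spaced nodes $i/n$ of a triangle in barycentric coordinates). *)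

theory Defs
  imports "HOL-Analysis.Analysis"
begin

definition lfac :: "nat \<Rightarrow> real \<Rightarrow> real" where
  "lfac k x = (1 / fact k) * (\<Prod>t<k. x - real t)"

text \<open>Lagrange fundamental polynomial l_i(lambda) for the equally spaced nodes i/n
  of a triangle, in barycentric coordinates lambda = (lambda_1, lambda_2, lambda_3),
  multi-index i = (i_1, i_2, i_3).\<close>
definition lagr :: "nat \<Rightarrow> nat \<times> nat \<times> nat \<Rightarrow> real \<times> real \<times> real \<Rightarrow> real" where
  "lagr n i lam = (case i of (i1, i2, i3) \<Rightarrow> case lam of (l1, l2, l3) \<Rightarrow>
      lfac i1 (real n * l1) * lfac i2 (real n * l2) * lfac i3 (real n * l3))"

end

theory Submission
  imports Defs
begin

text \<open>Write \<open>N = n - i\<^sub>1 = 2m\<close>. At \<open>\<lambda>\<^sup>*\<close> the Lagrange polynomial factors as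
  \<open>lfac i\<^sub>1 (n - \<alpha>\<^sub>2 - \<alpha>\<^sub>3) \<cdot> lfac m \<alpha>\<^sub>2 \<cdot> lfac m \<alpha>\<^sub>3\<close>. For \<open>0 \<le> a \<le> 1\<close> the factor
  \<open>lfac m a\<close> is at most \<open>a(1 - a)/m\<close> in absolute value, because every further factor
  \<open>(k - a)/(k + 1)\<close> is at most \<open>k/(k + 1)\<close>. The first factor is at most
  \<open>C(n, i\<^sub>1) ((N + 1)/(n + 1))^\<alpha>\<^sub>3\<close>: raising \<open>i\<close> by one multiplies it by
  \<open>(K - s)/(i + 1)\<close> with \<open>K = N + i + 1\<close> and \<open>s = \<alpha>\<^sub>2 + \<alpha>\<^sub>3\<close>, and \<open>K - s \<le> K - \<alpha>\<^sub>3 \<le> K (K/(K + 1))^\<alpha>\<^sub>3\<close>, so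
  the powers telescope. What is left is the scalar inequality
  \<open>((N + 1)/(n + 1))^a a(1 - a)(N - 1) e (ln n - 1) \<le> N\<^sup>2\<close>, which follows from
  \<open>ln n \<le> ln ((n + 1)/(N + 1)) + N\<close> and \<open>e y exp (-y) \<le> 1\<close>.\<close>

lemma lfac_Suc: "lfac (Suc k) x = lfac k x * (x - real k) / real (Suc k)"
  by (simp add: lfac_def)

lemma lfac_Suc_shift: "lfac (Suc k) (x + 1) = lfac k x * (x + 1) / real (Suc k)"
proof -
  have "(\<Prod>t<Suc k. x + 1 - real t) = (x + 1) * (\<Prod>t<k. x - real t)"
    by (subst prod.lessThan_Suc_shift) simp
  then show ?thesis unfolding lfac_def by (simp add: mult_ac)
qed

lemma lfac_nonneg:
  assumes "real k - 1 \<le> x"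
  shows "0 \<le> lfac k x"
  using assms unfolding lfac_def by (intro mult_nonneg_nonneg prod_nonneg) auto

lemma abs_lfac_le:
  fixes a :: real
  assumes "0 \<le> a" "a \<le> 1" "2 \<le> m"
  shows "\<bar>lfac m a\<bar> \<le> a * (1 - a) / real m"
  using assms(3)
proof (induction m rule: dec_induct)
  case base
  show ?case using assms by (simp add: lfac_def numeral_2_eq_2 abs_mult)
next
  case (step k)
  have "\<bar>lfac (Suc k) a\<bar> = \<bar>lfac k a\<bar> * (real k - a) / real (Suc k)"
    using step assms by (simp add: lfac_Suc abs_mult abs_of_nonpos)
  also have "\<dots> \<le> a * (1 - a) / real k * real k / real (Suc k)"
    using step assms by (intro divide_right_mono mult_mono) auto
  also have "\<dots> = a * (1 - a) / real (Suc k)"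
    using step by simp
  finally show ?case .
qed

lemma one_minus_div_le_powr:
  fixes K x :: real
  assumes "0 < K" "0 \<le> x"
  shows "1 - x / K \<le> (K / (K + 1)) powr x"
proof -
  have "ln (K / (K + 1)) = - ln (1 + 1 / K)"
    using assms by (simp add: ln_div field_simps)
  also have "\<dots> \<ge> - (1 / K)"
    using assms by (simp add: ln_add_one_self_le_self)
  finally have "- x / K \<le> x * ln (K / (K + 1))"
    using mult_left_mono[OF _ assms(2)] by fastforce
  then have "exp (- x / K) \<le> (K / (K + 1)) powr x"
    using assms by (simp add: powr_def)
  moreover have "1 - x / K \<le> exp (- x / K)"
    using exp_ge_add_one_self[of "- x / K"] by simp
  ultimately show ?thesis by linarith
qed

lemma real_binomial_Suc_Suc:
  "real (Suc n choose Suc k) = real (n choose k) * (real n + 1) / real (Suc k)"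
proof -
  have "real (Suc n * (n choose k)) = real ((Suc n choose Suc k) * Suc k)"
    by (simp only: Suc_times_binomial_eq)
  then show ?thesis by (simp add: field_simps del: binomial_Suc_Suc)
qed

lemma lfac_shifted_le_binomial_powr:
  fixes s x :: real and N i :: nat
  assumes "0 \<le> x" "x \<le> s" "s < real N + 1"
  shows "lfac i (real (N + i) - s)
    \<le> real ((N + i) choose i) * ((real N + 1) / (real (N + i) + 1)) powr x"
proof (induction i)
  case 0
  show ?case by (simp add: lfac_def)
next
  case (Suc i)
  define K where "K = real (N + i) + 1"
  define B where "B = real ((N + i) choose i) * ((real N + 1) / K) powr x"
  have K: "0 < K" "s < K"
    using assms by (auto simp: K_def)
  have "lfac (Suc i) (real (N + Suc i) - s) = lfac i (real (N + i) - s) * (K - s) / real (Suc i)"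
    using lfac_Suc_shift[of i "real (N + i) - s"] by (simp add: K_def algebra_simps)
  also have "\<dots> \<le> B * (K - x) / real (Suc i)"
    using Suc.IH lfac_nonneg[of i "real (N + i) - s"] assms K
    unfolding B_def K_def by (intro divide_right_mono mult_mono) auto
  also have "\<dots> \<le> B * (K * (K / (K + 1)) powr x) / real (Suc i)"
    using one_minus_div_le_powr[OF K(1) assms(1)] K
    unfolding B_def by (intro divide_right_mono mult_left_mono) (simp_all add: field_simps)
  also have "B * (K * (K / (K + 1)) powr x) / real (Suc i)
      = real ((N + i) choose i) * K / real (Suc i) * ((real N + 1) / (K + 1)) powr x"
    using K by (simp add: B_def powr_mult[symmetric])
  also have "real ((N + i) choose i) * K / real (Suc i) = real ((N + Suc i) choose Suc i)"
    by (simp only: K_def real_binomial_Suc_Suc add_Suc_right)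
  finally show ?case
    by (simp add: K_def add_ac)
qed

lemma Gamma_ratio_eq_binomial:
  fixes n k :: nat
  assumes "k < n"
  shows "Gamma (real n + 1) / (fact k * Gamma (real n - real k)) = real (n - k) * real (n choose k)"
proof -
  have "Gamma (real n + 1) = fact n"
    using Gamma_fact[of n] by (simp add: add.commute)
  moreover have "Gamma (real n - real k) = fact (n - k - 1)"
    using assms Gamma_fact[of "n - k - 1"] by (simp add: of_nat_diff)
  moreover have "fact n = fact k * fact (n - k) * real (n choose k)"
    using binomial_fact_lemma[of k n] assms by (metis less_imp_le of_nat_fact of_nat_mult)
  moreover have "fact (n - k) = real (n - k) * fact (n - k - 1)"
    using assms by (subst fact_reduce) auto
  ultimately show ?thesis by simp
qed

lemma powr_ratio_mult_ln_le_square: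
  fixes a :: real and N n :: nat
  assumes "1 \<le> N" "N \<le> n" "0 \<le> a" "a \<le> 1"
  shows "((real N + 1) / (real n + 1)) powr a * (a * (1 - a)) * (real N - 1)
           * exp 1 * (ln (real n) - 1) \<le> (real N)\<^sup>2"
proof -
  define L where "L = ln ((real n + 1) / (real N + 1))"
  define E where "E = exp (- (a * L))"
  have L: "0 \<le> L"
    using assms by (simp add: L_def)
  have powr_eq: "((real N + 1) / (real n + 1)) powr a = E"
    using assms by (simp add: E_def L_def powr_def ln_div algebra_simps)
  have "ln (real n) \<le> ln (real n + 1)"
    using assms by simp
  also have "\<dots> = L + ln (real N + 1)"
    using assms by (simp add: L_def ln_div)
  also have "ln (real N + 1) \<le> real N"
    using ln_le_minus_one[of "real N + 1"] by simp
  finally have ln_le: "ln (real n) - 1 \<le> L + (real N - 1)"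
    by simp
  have "exp 1 * (a * L) \<le> exp (a * L)"
    using exp_ge_add_one_self[of "a * L - 1"] by (simp add: exp_diff field_simps)
  then have peak: "exp 1 * (a * L) * E \<le> 1"
    by (simp add: E_def exp_minus field_simps)
  have E: "0 < E" "E \<le> 1"
    using L assms by (auto simp: E_def)
  have aa: "a * (1 - a) \<le> 1 / 4"
    using zero_le_power2[of "a - 1 / 2"] unfolding power2_eq_square by (simp add: algebra_simps)
  have e3: "exp 1 \<le> (3::real)"
    by (rule exp_le)
  have nonneg: "0 \<le> (1 - a) * (real N - 1)" "0 \<le> exp 1 * a * E"
    using assms E by auto
  have "((real N + 1) / (real n + 1)) powr a * (a * (1 - a)) * (real N - 1) * exp 1 * (ln (real n) - 1)
      = (1 - a) * (real N - 1) * (exp 1 * a * E * (ln (real n) - 1))"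
    by (simp add: powr_eq)
  also have "\<dots> \<le> (1 - a) * (real N - 1) * (exp 1 * a * E * (L + (real N - 1)))"
    using mult_left_mono[OF ln_le nonneg(2)] nonneg(1) by (rule mult_left_mono)
  also have "\<dots> = (1 - a) * (real N - 1) * (exp 1 * (a * L) * E + exp 1 * a * E * (real N - 1))"
    by (simp add: algebra_simps)
  also have "\<dots> \<le> (1 - a) * (real N - 1) * (1 + exp 1 * a * (real N - 1))"
    using peak E assms nonneg mult_right_le_one_le[of "exp 1 * a" E]
    by (intro mult_left_mono add_mono mult_right_mono) auto
  also have "\<dots> = (1 - a) * (real N - 1) + exp 1 * (a * (1 - a)) * (real N - 1)\<^sup>2"
    by (simp add: power2_eq_square algebra_simps)
  also have "\<dots> \<le> (real N - 1) + 3 * (1 / 4) * (real N - 1)\<^sup>2"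
    using assms aa e3 mult_left_le_one_le[of "real N - 1" "1 - a"]
    by (intro add_mono mult_right_mono mult_mono) auto
  also have "\<dots> \<le> (real N)\<^sup>2"
    by (simp add: power2_eq_square algebra_simps)
  finally show ?thesis .
qed

lemma lagr_lambda_star:
  fixes \<alpha>1 \<alpha>2 \<alpha>3 :: real
  assumes "0 < n" "\<alpha>1 = 1 - \<alpha>2 - \<alpha>3"
  shows "lagr n (i1, i2, i3) ((real n - 1 + \<alpha>1) / real n, \<alpha>2 / real n, \<alpha>3 / real n)
    = lfac i1 (real n - (\<alpha>2 + \<alpha>3)) * lfac i2 \<alpha>2 * lfac i3 \<alpha>3"
proof -
  have "real n * ((real n - 1 + \<alpha>1) / real n) = real n - (\<alpha>2 + \<alpha>3)"
    "real n * (\<alpha>2 / real n) = \<alpha>2" "real n * (\<alpha>3 / real n) = \<alpha>3"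
    using assms(1) by (simp_all add: assms(2) field_simps)
  then show ?thesis
    unfolding lagr_def prod.case by (simp only:)
qed

lemma abs_lagr_lambda_star_le:
  fixes \<alpha>1 \<alpha>2 \<alpha>3 :: real
  assumes "n = 2 * m + i" "2 \<le> m"
    and "0 < \<alpha>2" "\<alpha>2 < 1" "0 < \<alpha>3" "\<alpha>3 < 1" "\<alpha>1 = 1 - \<alpha>2 - \<alpha>3"
  shows "\<bar>lagr n (i, m, m) ((real n - 1 + \<alpha>1) / real n, \<alpha>2 / real n, \<alpha>3 / real n)\<bar>
    \<le> real (n choose i) * ((real (2 * m) + 1) / (real n + 1)) powr \<alpha>3
       * (\<alpha>2 * (1 - \<alpha>2) / real m) * (\<alpha>3 * (1 - \<alpha>3) / real m)"
proof -
  have n_pos: "0 < n"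
    using assms(1,2) by simp
  have "\<bar>lfac i (real n - (\<alpha>2 + \<alpha>3))\<bar>
      \<le> real (n choose i) * ((real (2 * m) + 1) / (real n + 1)) powr \<alpha>3"
    using lfac_shifted_le_binomial_powr[of \<alpha>3 "\<alpha>2 + \<alpha>3" "2 * m" i]
      lfac_nonneg[of i "real n - (\<alpha>2 + \<alpha>3)"] assms
    by simp
  then show ?thesis
    using abs_lfac_le[of \<alpha>2 m] abs_lfac_le[of \<alpha>3 m] assms
    unfolding lagr_lambda_star[OF n_pos assms(7)] abs_mult by (intro mult_mono) auto
qed

theorem lemma21:
  fixes n i1 :: nat and \<alpha>1 \<alpha>2 \<alpha>3 :: real
  assumes "n \<ge> 4"
    and "0 < \<alpha>2" "\<alpha>2 < 1" "0 < \<alpha>3" "\<alpha>3 < 1"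
    and "\<alpha>1 = 1 - \<alpha>2 - \<alpha>3"
    and "i1 \<le> n - 4" and "even (n - i1)"
  shows "\<bar>lagr n (i1, (n - i1) div 2, (n - i1) div 2)
            ((real n - 1 + \<alpha>1) / real n, \<alpha>2 / real n, \<alpha>3 / real n)\<bar>
         \<le> 1 / (exp 1 * (ln (real n) - 1))
           * (Gamma (real n + 1) / (fact i1 * Gamma (real n - real i1)))
           * (4 * \<alpha>2 * (1 - \<alpha>2) / ((real n - real i1) * (real n - real i1 - 1)))"
proof -
  define N m where "N = n - i1" and "m = (n - i1) div 2"
  define C L where "C = real (n choose i1)" and "L = ln (real n) - 1"
  define q where "q = ((real N + 1) / (real n + 1)) powr \<alpha>3 * (\<alpha>3 * (1 - \<alpha>3))"
  have n: "n = 2 * m + i1" "real n - real i1 = real N" and N: "N = 2 * m" "4 \<le> N"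
    using assms by (auto simp: N_def m_def)
  have "exp 1 < real n"
    using exp_le assms(1) by simp
  then have L: "0 < L"
    using assms(1) ln_less_cancel_iff[of "exp 1" "real n"] by (simp add: L_def)
  have G: "Gamma (real n + 1) / (fact i1 * Gamma (real N)) = real N * C"
    using Gamma_ratio_eq_binomial[of i1 n] assms(1,7) unfolding n(2) by (simp add: C_def flip: N_def)
  have "q * (real N - 1) * exp 1 * L \<le> (real N)\<^sup>2"
    using powr_ratio_mult_ln_le_square[of N n \<alpha>3] N n(1) assms(4,5)
    unfolding q_def L_def by (simp add: mult.assoc)
  then have q: "q * (real N - 1) * exp 1 * L / (real N)\<^sup>2 \<le> 1" "0 \<le> q"
    using N(2) assms(4,5) by (simp_all add: q_def)
  have "\<bar>lagr n (i1, m, m) ((real n - 1 + \<alpha>1) / real n, \<alpha>2 / real n, \<alpha>3 / real n)\<bar>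
      \<le> C * q * (\<alpha>2 * (1 - \<alpha>2)) / (real m)\<^sup>2"
    using abs_lagr_lambda_star_le[OF n(1) _ assms(2-6)] N unfolding C_def q_def N(1)
    by (simp add: power2_eq_square mult_ac)
  also have "\<dots> = 1 / (exp 1 * L) * (real N * C) * (4 * \<alpha>2 * (1 - \<alpha>2) / (real N * (real N - 1)))
      * (q * (real N - 1) * exp 1 * L / (real N)\<^sup>2)"
    using N L by (simp add: field_simps power2_eq_square)
  also have "\<dots> \<le> 1 / (exp 1 * L) * (real N * C) * (4 * \<alpha>2 * (1 - \<alpha>2) / (real N * (real N - 1)))"
    using q N(2) L assms(2,3) by (intro mult_right_le_one_le) (auto simp: C_def)
  finally show ?thesis
    unfolding m_def[symmetric] n(2) G L_def[symmetric] .
qed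

end
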